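(* For each $n$ let $\mathcal C_n\subset A_n$ be a conjugacy class of $S_n$ consisting of even permutations, with $\mathrm{supp}(\mathcal C_n)\ge 2$, and let $\overline u_n$ be the uniform measure on the alternating group $A_n$. Set $t_n=\frac n2\log n$. Then for every $\epsilon\in(0,1)$, $$\lim_{n\to\infty}d_2\big(h_{\mathcal C_n,(1-\epsilon)t_n},\overline u_n\big)=\infty.$$
   Context: For a conjugacy class $\mathcal C$ of $S_n$, $q_{\mathcal C}$ is the uniform probability measure on $\mathcal C$ and $\mathrm{supp}(\mathcal C)$ is the number of points not fixed by an element of $\mathcal C$. $h_{\mathcal C,t}=e^{-t}\sum_{k\ge0}\frac{t^k}{k!}q_{\mathcal C}^{(k)}$ (a probability measure on $A_n$ when $\mathcal C\subset A_n$), with $q^{(k)}$ the $k$-fold convolution power. For the group $G=A_n$, $d_2(p,\overline u)=\big(|A_n|\sum_{x\in A_n}|p(x)-\overline u(x)|^2\big)^{1/2}$. *)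

theory Defs
  imports "HOL-Analysis.Analysis" "HOL-Combinatorics.Permutations"
begin

text \<open>Permutations of [n] = {0..<n}, extended by the identity outside.\<close>

definition sym_grp :: "nat \<Rightarrow> (nat \<Rightarrow> nat) set" where
  "sym_grp n = {p. p permutes {..<n}}"

definition alt_grp :: "nat \<Rightarrow> (nat \<Rightarrow> nat) set" where
  "alt_grp n = {p. p permutes {..<n} \<and> evenperm p}"

definition conj_class :: "nat \<Rightarrow> (nat \<Rightarrow> nat) \<Rightarrow> (nat \<Rightarrow> nat) set" where
  "conj_class n c = {\<sigma> \<circ> c \<circ> inv \<sigma> | \<sigma>. \<sigma> permutes {..<n}}"

definition supp_size :: "(nat \<Rightarrow> nat) \<Rightarrow> nat" where
  "supp_size c = card {i. c i \<noteq> i}"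

definition unif :: "(nat \<Rightarrow> nat) set \<Rightarrow> (nat \<Rightarrow> nat) \<Rightarrow> real" where
  "unif A x = (if x \<in> A then 1 / real (card A) else 0)"

definition conv :: "(nat \<Rightarrow> nat) set \<Rightarrow> ((nat \<Rightarrow> nat) \<Rightarrow> real) \<Rightarrow> ((nat \<Rightarrow> nat) \<Rightarrow> real)
    \<Rightarrow> (nat \<Rightarrow> nat) \<Rightarrow> real" where
  "conv G p q x = (\<Sum>y\<in>G. p y * q (inv y \<circ> x))"

fun conv_pow :: "(nat \<Rightarrow> nat) set \<Rightarrow> ((nat \<Rightarrow> nat) \<Rightarrow> real) \<Rightarrow> nat \<Rightarrow> (nat \<Rightarrow> nat) \<Rightarrow> real" where
  "conv_pow G q 0 = (\<lambda>x. if x = id then 1 else 0)"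
| "conv_pow G q (Suc k) = conv G (conv_pow G q k) q"

definition heat :: "(nat \<Rightarrow> nat) set \<Rightarrow> ((nat \<Rightarrow> nat) \<Rightarrow> real) \<Rightarrow> real \<Rightarrow> (nat \<Rightarrow> nat) \<Rightarrow> real" where
  "heat G q t x = (\<Sum>k. exp (- t) * t ^ k / fact k * conv_pow G q k x)"

definition d2 :: "(nat \<Rightarrow> nat) set \<Rightarrow> ((nat \<Rightarrow> nat) \<Rightarrow> real) \<Rightarrow> ((nat \<Rightarrow> nat) \<Rightarrow> real) \<Rightarrow> real" where
  "d2 G p u = sqrt (real (card G) * (\<Sum>x\<in>G. \<bar>p x - u x\<bar>\<^sup>2))"

end

theory Submission
  imports Defs
begin

(* The continuous-time measure h_t performs no step at all with
   probability e^{-t}, so h_t(id) >= e^{-t}. *)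

lemma conv_pow_nonneg:
  assumes "\<And>x. 0 \<le> q x"
  shows "0 \<le> conv_pow G q k x"
  by (induction k arbitrary: x) (simp_all add: conv_def assms sum_nonneg)

lemma conv_pow_le_card_pow:
  assumes "\<And>x. 0 \<le> q x" and "\<And>x. q x \<le> 1"
  shows "conv_pow G q k x \<le> real (card G) ^ k"
proof (induction k arbitrary: x)
  case 0
  then show ?case by simp
next
  case (Suc k)
  have "conv_pow G q (Suc k) x = (\<Sum>y\<in>G. conv_pow G q k y * q (inv y \<circ> x))"
    by (simp add: conv_def)
  also have "\<dots> \<le> (\<Sum>y\<in>G. real (card G) ^ k * 1)"
    by (intro sum_mono mult_mono) (simp_all add: Suc assms conv_pow_nonneg)
  also have "\<dots> = real (card G) ^ Suc k"
    by simp
  finally show ?case .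
qed

text \<open>The heat series converges (it is dominated by the exponential series of t|G|).\<close>
lemma heat_summable:
  assumes "\<And>x. 0 \<le> q x" and "\<And>x. q x \<le> 1" and "0 \<le> t"
  shows "summable (\<lambda>k. exp (- t) * t ^ k / fact k * conv_pow G q k x)"
proof (rule summable_comparison_test)
  show "summable (\<lambda>k. exp (- t) * ((t * real (card G)) ^ k /\<^sub>R fact k))"
    using exp_converges[of "t * real (card G)"] by (intro summable_mult) (auto simp: sums_iff)
  have "norm (exp (- t) * t ^ k / fact k * conv_pow G q k x)
          \<le> exp (- t) * ((t * real (card G)) ^ k /\<^sub>R fact k)" for k
  proof -
    have "exp (- t) * t ^ k / fact k * conv_pow G q k x
            \<le> exp (- t) * t ^ k / fact k * real (card G) ^ k"
      by (intro mult_left_mono) (simp_all add: assms conv_pow_le_card_pow)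
    moreover have "0 \<le> exp (- t) * t ^ k / fact k * conv_pow G q k x"
      by (simp add: assms conv_pow_nonneg)
    ultimately show ?thesis
      by (simp add: power_mult_distrib field_simps)
  qed
  then show "\<exists>N. \<forall>k\<ge>N. norm (exp (- t) * t ^ k / fact k * conv_pow G q k x)
                  \<le> exp (- t) * ((t * real (card G)) ^ k /\<^sub>R fact k)"
    by blast
qed

text \<open>The term k = 0 of the heat series: with probability e^{-t} no step is made,
  so the heat measure puts mass at least e^{-t} on the identity.\<close>
lemma heat_id_ge_exp:
  assumes "\<And>x. 0 \<le> q x" and "\<And>x. q x \<le> 1" and "0 \<le> t"
  shows "exp (- t) \<le> heat G q t id"
proof -
  let ?term = "\<lambda>k. exp (- t) * t ^ k / fact k * conv_pow G q k id"
  have "sum ?term {0} \<le> suminf ?term"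
    using heat_summable[OF assms]
    by (rule sum_le_suminf) (simp_all add: assms conv_pow_nonneg)
  then show ?thesis
    by (simp add: heat_def)
qed

lemma unif_bounds: "0 \<le> unif A x" "unif A x \<le> 1"
  by (simp_all add: unif_def divide_le_eq)

text \<open>Keeping only the term of a single point x of G in the L2 sum:
  d_2(p, u) >= sqrt |G| * p(x) - 1.\<close>
lemma d2_unif_ge_point:
  assumes "finite G" and "x \<in> G"
  shows "sqrt (real (card G)) * p x - 1 \<le> d2 G p (unif G)"
proof -
  define N where "N = real (card G)"
  have N_ge_1: "1 \<le> N"
    using assms by (auto simp: N_def Suc_le_eq card_gt_0_iff)
  have "\<bar>p x - 1 / N\<bar>\<^sup>2 \<le> (\<Sum>y\<in>G. \<bar>p y - unif G y\<bar>\<^sup>2)"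
    using member_le_sum[of x G "\<lambda>y. \<bar>p y - unif G y\<bar>\<^sup>2"] assms
    by (simp add: unif_def N_def)
  then have "sqrt (N * \<bar>p x - 1 / N\<bar>\<^sup>2) \<le> d2 G p (unif G)"
    unfolding d2_def N_def[symmetric] using N_ge_1
    by (intro real_sqrt_le_mono mult_left_mono) auto
  moreover have "sqrt (N * \<bar>p x - 1 / N\<bar>\<^sup>2) = sqrt N * \<bar>p x - 1 / N\<bar>"
    by (simp add: real_sqrt_mult)
  moreover have "sqrt N * (p x - 1 / N) \<le> sqrt N * \<bar>p x - 1 / N\<bar>"
    using N_ge_1 by (intro mult_left_mono) auto
  moreover have "sqrt N / N \<le> 1"
    using N_ge_1 by (simp add: sqrt_divide_self_eq inverse_le_1_iff)
  ultimately show ?thesis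
    unfolding N_def[symmetric] by (simp add: right_diff_distrib)
qed

lemma finite_alt_grp: "finite (alt_grp n)"
  by (rule finite_subset[OF _ finite_permutations[of "{..<n}"]]) (auto simp: alt_grp_def)

lemma id_in_alt_grp: "id \<in> alt_grp n"
  by (simp add: alt_grp_def permutes_id)

text \<open>For n >= 2, composing with the transposition (0 1) maps the odd permutations
  injectively into the even ones, so at least half of S_n is even.\<close>
lemma fact_le_twice_card_alt_grp:
  assumes "2 \<le> n"
  shows "fact n \<le> 2 * real (card (alt_grp n))"
proof -
  let ?odd = "{p. p permutes {..<n} \<and> \<not> evenperm p}"
  let ?tau = "Transposition.transpose (0::nat) 1"
  have tau_permutes: "?tau permutes {..<n}"
    using assms by (intro permutes_swap_id) auto
  have tau_odd: "\<not> evenperm ?tau"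
    using evenperm_swap[of "0::nat" 1] by simp
  have "card ?odd \<le> card (alt_grp n)"
  proof (rule card_inj_on_le)
    show "inj_on ((\<circ>) ?tau) ?odd"
    proof (rule inj_onI)
      fix p p' assume "?tau \<circ> p = ?tau \<circ> p'"
      then have "?tau \<circ> (?tau \<circ> p) = ?tau \<circ> (?tau \<circ> p')"
        by simp
      then show "p = p'"
        by (simp add: o_assoc)
    qed
    show "(\<circ>) ?tau ` ?odd \<subseteq> alt_grp n"
    proof
      fix x assume "x \<in> (\<circ>) ?tau ` ?odd"
      then obtain p where p: "p permutes {..<n}" "\<not> evenperm p" and x: "x = ?tau \<circ> p"
        by auto
      have "permutation p"
        using p(1) permutation_permutes by blast
      then have "evenperm (?tau \<circ> p) = (evenperm ?tau = evenperm p)"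
        by (rule evenperm_comp[OF permutation_swap_id])
      then have "evenperm x"
        using x p(2) tau_odd by simp
      moreover have "x permutes {..<n}"
        using x p(1) tau_permutes permutes_compose by blast
      ultimately show "x \<in> alt_grp n"
        by (simp add: alt_grp_def)
    qed
    show "finite (alt_grp n)"
      by (rule finite_alt_grp)
  qed
  moreover have "{p. p permutes {..<n}} = alt_grp n \<union> ?odd"
    by (auto simp: alt_grp_def)
  then have "card {p. p permutes {..<n}} \<le> card (alt_grp n) + card ?odd"
    by (metis card_Un_le)
  moreover have "card {p. p permutes {..<n}} = fact n"
    by (rule card_permutations) auto
  ultimately have "fact n \<le> 2 * card (alt_grp n)"
    by simp
  then show ?thesis
    by (metis of_nat_fact of_nat_le_iff of_nat_mult of_nat_numeral)
qed

text \<open>Elementary Stirling-type lower bound: n^n / n! is one term of the series of e^n.\<close>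
lemma pow_self_div_exp_le_fact: "real n ^ n / exp (real n) \<le> fact n"
proof -
  have series: "(\<lambda>k. real n ^ k / fact k) sums exp (real n)"
    using exp_converges[of "real n"] by (simp add: divide_inverse mult.commute)
  have "sum (\<lambda>k. real n ^ k / fact k) {n} \<le> suminf (\<lambda>k. real n ^ k / fact k)"
    using series by (intro sum_le_suminf) (auto simp: sums_iff)
  then have "real n ^ n / fact n \<le> exp (real n)"
    using series by (simp add: sums_iff)
  then show ?thesis
    by (simp add: field_simps)
qed

lemma sqrt_card_alt_grp_ge:
  assumes "2 \<le> n"
  shows "exp ((real n * ln (real n) - real n) / 2) / sqrt 2 \<le> sqrt (real (card (alt_grp n)))"
proof -
  have "exp (real n * ln (real n) - real n) = real n ^ n / exp (real n)"
    using assms by (simp add: exp_diff exp_of_nat_mult)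
  also have "\<dots> \<le> 2 * real (card (alt_grp n))"
    using pow_self_div_exp_le_fact fact_le_twice_card_alt_grp[OF assms] by (rule order_trans)
  finally have "sqrt (exp (real n * ln (real n) - real n)) \<le> sqrt 2 * sqrt (real (card (alt_grp n)))"
    by (simp flip: real_sqrt_mult)
  moreover have "sqrt (exp (real n * ln (real n) - real n)) = exp ((real n * ln (real n) - real n) / 2)"
    by (rule real_sqrt_unique) (simp_all flip: exp_double)
  ultimately show ?thesis
    by (simp add: divide_le_eq mult.commute)
qed

text \<open>Before time (1 - eps) (n/2) ln n the heat measure on A_n is far from uniform:
  the mass e^{-t} left at the identity dominates 1/|A_n|.\<close>
lemma d2_heat_alt_grp_ge:
  assumes "2 \<le> n" and "0 \<le> t" and "\<And>x. 0 \<le> q x" and "\<And>x. q x \<le> 1"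
  shows "exp ((real n * ln (real n) - real n) / 2) / sqrt 2 * exp (- t) - 1
           \<le> d2 (alt_grp n) (heat (alt_grp n) q t) (unif (alt_grp n))"
proof -
  let ?A = "alt_grp n"
  have "exp ((real n * ln (real n) - real n) / 2) / sqrt 2 * exp (- t)
          \<le> sqrt (real (card ?A)) * heat ?A q t id"
    using sqrt_card_alt_grp_ge[OF assms(1)] heat_id_ge_exp[OF assms(3,4,2)]
    by (intro mult_mono) simp_all
  also have "\<dots> - 1 \<le> d2 ?A (heat ?A q t) (unif ?A)"
    using d2_unif_ge_point[OF finite_alt_grp id_in_alt_grp] .
  finally show ?thesis
    by simp
qed

text \<open>The lower bound equals exp (n (eps ln n - 1) / 2) / sqrt 2 - 1, and n (eps ln n - 1)
  tends to infinity because eps ln n does.\<close>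
lemma cutoff_lower_bound_diverges:
  assumes "0 < \<epsilon>"
  shows "filterlim (\<lambda>n. exp ((real n * ln (real n) - real n) / 2) / sqrt 2
                         * exp (- ((1 - \<epsilon>) * (real n / 2 * ln (real n)))) - 1)
           at_top sequentially"
proof -
  have n_lim: "filterlim (\<lambda>n. real n) at_top sequentially"
    by (rule filterlim_real_sequentially)
  have "filterlim (\<lambda>n. \<epsilon> * ln (real n)) at_top sequentially"
    using filterlim_compose[OF ln_at_top n_lim]
    by (rule filterlim_tendsto_pos_mult_at_top[OF tendsto_const assms])
  then have "filterlim (\<lambda>n. (- 1) + \<epsilon> * ln (real n)) at_top sequentially"
    by (rule filterlim_tendsto_add_at_top[OF tendsto_const])
  then have exponent_lim: "filterlim (\<lambda>n. real n * (\<epsilon> * ln (real n) - 1)) at_top sequentially"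
    using filterlim_at_top_mult_at_top[OF n_lim] by simp
  have "filterlim (\<lambda>n. 1 / 2 * (real n * (\<epsilon> * ln (real n) - 1))) at_top sequentially"
    by (rule filterlim_tendsto_pos_mult_at_top[OF tendsto_const _ exponent_lim]) simp
  then have exp_lim: "filterlim (\<lambda>n. exp (1 / 2 * (real n * (\<epsilon> * ln (real n) - 1))))
               at_top sequentially"
    by (rule filterlim_compose[OF exp_at_top])
  have "filterlim (\<lambda>n. 1 / sqrt 2 * exp (1 / 2 * (real n * (\<epsilon> * ln (real n) - 1))))
               at_top sequentially"
    by (rule filterlim_tendsto_pos_mult_at_top[OF tendsto_const _ exp_lim]) simp
  then have "filterlim (\<lambda>n. (- 1) + 1 / sqrt 2 * exp (1 / 2 * (real n * (\<epsilon> * ln (real n) - 1))))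
               at_top sequentially"
    by (rule filterlim_tendsto_add_at_top[OF tendsto_const])
  moreover have "exp ((real n * ln (real n) - real n) / 2) / sqrt 2
                   * exp (- ((1 - \<epsilon>) * (real n / 2 * ln (real n)))) - 1
                 = (- 1) + 1 / sqrt 2 * exp (1 / 2 * (real n * (\<epsilon> * ln (real n) - 1)))" for n
  proof -
    have "(real n * ln (real n) - real n) / 2 + - ((1 - \<epsilon>) * (real n / 2 * ln (real n)))
            = 1 / 2 * (real n * (\<epsilon> * ln (real n) - 1))"
      by (simp add: field_simps)
    then show ?thesis
      by (simp flip: exp_add)
  qed
  ultimately show ?thesis
    by simp
qed

theorem theorem5p3:
  fixes C :: "nat \<Rightarrow> (nat \<Rightarrow> nat) set" and \<epsilon> :: real
  assumes "\<forall>\<^sub>F n in sequentially. \<exists>c. c permutes {..<n} \<and> C n = conj_class n c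
              \<and> C n \<subseteq> alt_grp n \<and> supp_size c \<ge> 2"
    and "0 < \<epsilon>" and "\<epsilon> < 1"
  shows "filterlim (\<lambda>n. d2 (alt_grp n)
            (heat (alt_grp n) (unif (C n)) ((1 - \<epsilon>) * (real n / 2 * ln (real n))))
            (unif (alt_grp n))) at_top sequentially"
proof (rule filterlim_at_top_mono[OF cutoff_lower_bound_diverges[OF assms(2)]],
       rule eventually_sequentiallyI[of 2], rule d2_heat_alt_grp_ge)
  show "0 \<le> (1 - \<epsilon>) * (real n / 2 * ln (real n))" if "2 \<le> n" for n
    using that assms(3) by simp
qed (simp_all add: unif_bounds)

end
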